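(* Let $C\subset\mathbb R^3$ be an embedded curve (closed or non-closed) with nowhere vanishing curvature, and let $F\in\mathcal D(|C|)$ be a normal form. Then $F(\Omega_\epsilon)\cap\check F(\Omega_\epsilon)=C$ for all sufficiently small $\epsilon>0$. Moreover, the origami map $\Phi_F$ has no self-intersections (on $\Omega_\epsilon$ for sufficiently small $\epsilon>0$).
   Context: $C$ has length $l>0$ and an orientation; $-C$ is the oppositely oriented curve. $J=[-l/2,l/2]$ if $C$ is non-closed, $J=\mathbb R/l\mathbb Z$ if closed; $\Omega_\epsilon:=J\times(-\epsilon,\epsilon)$. A developable strip along $C$ is the germ of a $C^\infty$ embedding $f(u,v)=f(u,0)+v\,\xi_f(u)$ with $\mathbf c_f(u)=f(u,0)$ parametrizing $C$, $\xi_f$ a unit vector field, and zero Gaussian curvature; with the Frenet frame $(\mathbf e,\mathbf n,\mathbf b)$ of $\mathbf c_f$ write $\xi_f=\cos\beta_f\,\mathbf e+\sin\beta_f(\cos\alpha_f\,\mathbf n+\sin\alpha_f\,\mathbf b)$. $\mathcal D(C)$: strips with $\mathbf c_f$ inducing the orientation of $C$ and $0<|\cos\alpha_f|<1$, normalized so $0<|\alpha_f|<\pi/2$ (first angular function), $0<\beta_f<\pi$. $\mathcal D(|C|)=\mathcal D(C)\cup\mathcal D(-C)$. A normal form is such a strip $F(s,v)$ defined near $J\times\{0\}$ with $s\mapsto F(s,0)$ an arc-length parametrization of $C$; it is determined by this parametrization and its first angular function (zero Gaussian curvature being equivalent to $\cot\beta_F=(\alpha_F'+\tau)/(\kappa\sin\alpha_F)$).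 The dual $\check F$ is the normal form with $\check F(s,0)=F(s,0)$ and first angular function $-\alpha_F$. The origami map is $\Phi_F(s,v)=F(s,v)$ for $v\ge0$ and $\Phi_F(s,v)=\check F(s,v)$ for $v<0$. *)

theory Defs
  imports "HOL-Analysis.Analysis"
begin

definition vderiv :: "(real \<Rightarrow> 'a::real_normed_vector) \<Rightarrow> real \<Rightarrow> 'a" where
  "vderiv f = (\<lambda>x. vector_derivative f (at x))"

definition smooth_fn :: "(real \<Rightarrow> 'a::real_normed_vector) \<Rightarrow> bool" where
  "smooth_fn f \<longleftrightarrow> (\<forall>n x. ((vderiv ^^ n) f) differentiable (at x))"

text \<open>Parameter domain J: [-l/2,l/2] in the non-closed case; in the closed case
  R/lZ is modelled by all of R together with l-periodicity.\<close>
definition Jdom :: "bool \<Rightarrow> real \<Rightarrow> real set" where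
  "Jdom cl l = (if cl then UNIV else {-l/2..l/2})"

definition Jeq :: "bool \<Rightarrow> real \<Rightarrow> real \<Rightarrow> real \<Rightarrow> bool" where
  "Jeq cl l s t \<longleftrightarrow> (if cl then (\<exists>k::int. s - t = of_int k * l) else s = t)"

definition Omega :: "bool \<Rightarrow> real \<Rightarrow> real \<Rightarrow> (real \<times> real) set" where
  "Omega cl l \<epsilon> = Jdom cl l \<times> {-\<epsilon><..<\<epsilon>}"

definition periodic :: "real \<Rightarrow> (real \<Rightarrow> 'a) \<Rightarrow> bool" where
  "periodic l f \<longleftrightarrow> (\<forall>s. f (s + l) = f s)"

definition curvature :: "(real \<Rightarrow> real^3) \<Rightarrow> real \<Rightarrow> real" where
  "curvature c s = norm (vderiv (vderiv c) s)"

definition tangent :: "(real \<Rightarrow> real^3) \<Rightarrow> real \<Rightarrow> real^3" where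
  "tangent c s = vderiv c s"

definition principal_normal :: "(real \<Rightarrow> real^3) \<Rightarrow> real \<Rightarrow> real^3" where
  "principal_normal c s = (1 / curvature c s) *\<^sub>R vderiv (vderiv c) s"

definition binormal :: "(real \<Rightarrow> real^3) \<Rightarrow> real \<Rightarrow> real^3" where
  "binormal c s = cross3 (tangent c s) (principal_normal c s)"

definition torsion :: "(real \<Rightarrow> real^3) \<Rightarrow> real \<Rightarrow> real" where
  "torsion c s = (cross3 (vderiv c s) (vderiv (vderiv c) s) \<bullet> vderiv (vderiv (vderiv c)) s)
                 / (curvature c s)\<^sup>2"

definition arclength_embedded_curve :: "bool \<Rightarrow> real \<Rightarrow> (real \<Rightarrow> real^3) \<Rightarrow> bool" where
  "arclength_embedded_curve cl l c \<longleftrightarrow>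
     l > 0 \<and> smooth_fn c \<and>
     (\<forall>s\<in>Jdom cl l. norm (vderiv c s) = 1) \<and>
     (if cl then periodic l c \<and> inj_on c {0..<l} else inj_on c {-l/2..l/2})"

definition ruling :: "(real \<Rightarrow> real^3) \<Rightarrow> (real \<Rightarrow> real) \<Rightarrow> (real \<Rightarrow> real) \<Rightarrow> real \<Rightarrow> real^3" where
  "ruling c \<alpha> \<beta> s = cos (\<beta> s) *\<^sub>R tangent c s
      + sin (\<beta> s) *\<^sub>R (cos (\<alpha> s) *\<^sub>R principal_normal c s + sin (\<alpha> s) *\<^sub>R binormal c s)"

definition strip :: "(real \<Rightarrow> real^3) \<Rightarrow> (real \<Rightarrow> real) \<Rightarrow> (real \<Rightarrow> real) \<Rightarrow> real \<times> real \<Rightarrow> real^3" where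
  "strip c \<alpha> \<beta> = (\<lambda>(s, v). c s + v *\<^sub>R ruling c \<alpha> \<beta> s)"

text \<open>Normal form along the arc-length parametrization c with first angular function alpha
  (0 < |alpha| < pi/2) and second angular function beta in (0,pi); zero Gaussian curvature
  is expressed by cot beta = (alpha' + tau)/(kappa sin alpha).\<close>
definition normal_form :: "bool \<Rightarrow> real \<Rightarrow> (real \<Rightarrow> real^3) \<Rightarrow> (real \<Rightarrow> real) \<Rightarrow> (real \<Rightarrow> real) \<Rightarrow> bool" where
  "normal_form cl l c \<alpha> \<beta> \<longleftrightarrow>
     smooth_fn \<alpha> \<and> smooth_fn \<beta> \<and>
     (cl \<longrightarrow> periodic l \<alpha> \<and> periodic l \<beta>) \<and>
     (\<forall>s\<in>Jdom cl l. 0 < \<bar>\<alpha> s\<bar> \<and> \<bar>\<alpha> s\<bar> < pi/2 \<and> 0 < \<beta> s \<and> \<beta> s < pi \<and>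
        cot (\<beta> s) = (vderiv \<alpha> s + torsion c s) / (curvature c s * sin (\<alpha> s)))"

definition origami :: "((real \<times> real) \<Rightarrow> real^3) \<Rightarrow> ((real \<times> real) \<Rightarrow> real^3) \<Rightarrow> real \<times> real \<Rightarrow> real^3" where
  "origami F Fd = (\<lambda>(s, v). if v \<ge> 0 then F (s, v) else Fd (s, v))"

end

(* Both claims reduce to one fact about two ruled sheets c(s) + v xi1(s) and c(t) + w xi2(t)
   over the same curve: if c is injective and its tangent is transversal to the rulings, i.e. some
   vector u(t) is orthogonal to xi1(t) and xi2(t) but not to c'(t), then a coincidence with small
   v, w forces s = t.  Far from the diagonal, compactness keeps c(s) and c(t) a definite distance
   apart, which short rulings cannot bridge.  Near the diagonal, linearising at t turns the
   coincidence into (s - t) c'(t) + v xi1(t) - w xi2(t) = o(|s - t|), and projecting onto u(t)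
   bounds |s - t| by a fraction of itself.  Once s = t, the coincidence reads v xi1(t) = w xi2(t):
   for a single unit ruling this gives v = w, and the rulings of F and of its dual are linearly
   independent because 0 < |alpha| < pi/2, so v = w = 0.  For a closed curve all data are
   l-periodic and the argument runs on a compact window of representatives. *)

theory Submission
  imports Defs
begin

lemma C1_differentiable_on_bounded_bilinear:
  fixes prod :: "'a::real_normed_vector \<Rightarrow> 'b::real_normed_vector \<Rightarrow> 'c::real_normed_vector"
  assumes prod: "bounded_bilinear prod"
    and f: "f C1_differentiable_on S" and g: "g C1_differentiable_on S"
  shows "(\<lambda>x. prod (f x) (g x)) C1_differentiable_on S"
proof -
  obtain f' where f': "\<And>x. x \<in> S \<Longrightarrow> (f has_vector_derivative f' x) (at x)" "continuous_on S f'"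
    using f unfolding C1_differentiable_on_def by blast
  obtain g' where g': "\<And>x. x \<in> S \<Longrightarrow> (g has_vector_derivative g' x) (at x)" "continuous_on S g'"
    using g unfolding C1_differentiable_on_def by blast
  define D where "D x = prod (f x) (g' x) + prod (f' x) (g x)" for x
  have "((\<lambda>x. prod (f x) (g x)) has_vector_derivative D x) (at x)" if "x \<in> S" for x
    unfolding D_def using bounded_bilinear.has_vector_derivative[OF prod f'(1)[OF that] g'(1)[OF that]] .
  moreover have "continuous_on S D"
    unfolding D_def
    using C1_differentiable_imp_continuous_on[OF f] C1_differentiable_imp_continuous_on[OF g] f'(2) g'(2)
    by (intro continuous_on_add bounded_bilinear.continuous_on[OF prod])
  ultimately show ?thesis
    unfolding C1_differentiable_on_def by blast
qed

lemma C1_differentiable_on_compose_real: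
  fixes f :: "real \<Rightarrow> real"
  assumes f: "f C1_differentiable_on S"
    and g: "\<And>x. x \<in> S \<Longrightarrow> (g has_real_derivative g' (f x)) (at (f x))"
    and g': "continuous_on (f ` S) g'"
  shows "(\<lambda>x. g (f x)) C1_differentiable_on S"
proof -
  obtain f' where f': "\<And>x. x \<in> S \<Longrightarrow> (f has_real_derivative f' x) (at x)" "continuous_on S f'"
    using f unfolding C1_differentiable_on_def has_real_derivative_iff_has_vector_derivative by blast
  define D where "D x = g' (f x) * f' x" for x
  have "((\<lambda>x. g (f x)) has_real_derivative D x) (at x)" if "x \<in> S" for x
    unfolding D_def using DERIV_chain2[OF g[OF that] f'(1)[OF that]] .
  moreover have "continuous_on S D"
    unfolding D_def
    using continuous_on_compose2[OF g' C1_differentiable_imp_continuous_on[OF f] subset_refl] f'(2)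
    by (rule continuous_on_mult)
  ultimately show ?thesis
    unfolding C1_differentiable_on_def has_real_derivative_iff_has_vector_derivative by blast
qed

lemma C1_differentiable_on_cos:
  fixes f :: "real \<Rightarrow> real"
  shows "f C1_differentiable_on S \<Longrightarrow> (\<lambda>x. cos (f x)) C1_differentiable_on S"
  by (rule C1_differentiable_on_compose_real[where g = cos and g' = "\<lambda>y. - sin y"])
    (auto intro!: DERIV_cos continuous_intros)

lemma C1_differentiable_on_sin:
  fixes f :: "real \<Rightarrow> real"
  shows "f C1_differentiable_on S \<Longrightarrow> (\<lambda>x. sin (f x)) C1_differentiable_on S"
  by (rule C1_differentiable_on_compose_real[where g = sin and g' = cos])
    (auto intro!: DERIV_sin continuous_intros)

lemma C1_differentiable_on_inverse:
  fixes f :: "real \<Rightarrow> real"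
  assumes "f C1_differentiable_on S" "\<And>x. x \<in> S \<Longrightarrow> f x \<noteq> 0"
  shows "(\<lambda>x. inverse (f x)) C1_differentiable_on S"
  using assms
  by (intro C1_differentiable_on_compose_real[where g = inverse and g' = "\<lambda>y. - (inverse y ^ 2)"])
    (auto intro!: DERIV_inverse[THEN DERIV_cong] continuous_intros simp: numeral_2_eq_2)

lemma C1_differentiable_on_norm:
  fixes f :: "real \<Rightarrow> 'a::real_inner"
  assumes f: "f C1_differentiable_on S" and nz: "\<And>x. x \<in> S \<Longrightarrow> f x \<noteq> 0"
  shows "(\<lambda>x. norm (f x)) C1_differentiable_on S"
proof -
  have "(\<lambda>x. sqrt (f x \<bullet> f x)) C1_differentiable_on S"
    using nz
    by (intro C1_differentiable_on_compose_real[where g = sqrt and g' = "\<lambda>y. inverse (sqrt y) / 2"]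
        C1_differentiable_on_bounded_bilinear[OF bounded_bilinear_inner f f])
      (auto intro!: DERIV_real_sqrt continuous_intros)
  then show ?thesis
    by (simp add: norm_eq_sqrt_inner)
qed

lemma C1_differentiable_on_imp_lipschitz:
  fixes f :: "real \<Rightarrow> 'a::real_normed_vector"
  assumes f: "f C1_differentiable_on S" and S: "compact S" "convex S"
  obtains L where "L-lipschitz_on S f"
proof -
  obtain f' where f': "\<And>x. x \<in> S \<Longrightarrow> (f has_vector_derivative f' x) (at x)" "continuous_on S f'"
    using f unfolding C1_differentiable_on_def by blast
  obtain B where B: "B > 0" "\<And>x. x \<in> S \<Longrightarrow> norm (f' x) \<le> B"
    using compact_imp_bounded[OF compact_continuous_image[OF f'(2) S(1)]]
    unfolding bounded_pos by blast
  have "B-lipschitz_on S f"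
  proof (rule bounded_derivative_imp_lipschitz[OF _ S(2) _ less_imp_le[OF B(1)]])
    show "(f has_derivative (\<lambda>h. h *\<^sub>R f' x)) (at x within S)" if "x \<in> S" for x
      using f'(1)[OF that] by (simp add: has_vector_derivative_def has_derivative_at_withinI)
    show "onorm (\<lambda>h. h *\<^sub>R f' x) \<le> B" if "x \<in> S" for x
      using B(2)[OF that] by (simp add: onorm_scaleR_left[OF bounded_linear_ident] onorm_id)
  qed
  then show ?thesis ..
qed

lemma smooth_fn_has_vector_derivative:
  "smooth_fn f \<Longrightarrow> (f has_vector_derivative vderiv f x) (at x)"
  unfolding smooth_fn_def vderiv_def by (metis funpow_0 vector_derivative_works)

lemma smooth_fn_vderiv: "smooth_fn f \<Longrightarrow> smooth_fn (vderiv f)"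
  unfolding smooth_fn_def by (metis comp_apply funpow_Suc_right)

lemma smooth_fn_C1_differentiable_on: "smooth_fn f \<Longrightarrow> f C1_differentiable_on S"
  unfolding C1_differentiable_on_def
  using smooth_fn_has_vector_derivative smooth_fn_has_vector_derivative[OF smooth_fn_vderiv]
  by (metis continuous_at_imp_continuous_on has_vector_derivative_continuous)

section \<open>Ruled sheets over a transversal curve\<close>

lemma uniform_linearization:
  fixes c :: "real \<Rightarrow> 'a::real_normed_vector"
  assumes c: "\<And>x. x \<in> S \<Longrightarrow> (c has_vector_derivative c' x) (at x)" "continuous_on S c'"
    and S: "compact S" "convex S" and \<theta>: "\<theta> > 0"
  obtains \<delta> where "\<delta> > 0"
    "\<And>s t. s \<in> S \<Longrightarrow> t \<in> S \<Longrightarrow> \<bar>s - t\<bar> < \<delta> \<Longrightarrow> norm (c s - c t - (s - t) *\<^sub>R c' t) \<le> \<theta> * \<bar>s - t\<bar>"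
proof -
  obtain \<delta> where \<delta>: "\<delta> > 0" "\<And>x t. x \<in> S \<Longrightarrow> t \<in> S \<Longrightarrow> dist x t < \<delta> \<Longrightarrow> dist (c' x) (c' t) < \<theta>"
    using compact_uniformly_continuous[OF c(2) S(1)] \<theta> unfolding uniformly_continuous_on_def by metis
  have "norm (c s - c t - (s - t) *\<^sub>R c' t) \<le> \<theta> * \<bar>s - t\<bar>"
    if s: "s \<in> S" and t: "t \<in> S" and st: "\<bar>s - t\<bar> < \<delta>" for s t
  proof -
    have seg: "closed_segment t s \<subseteq> S"
      using S(2) s t by (simp add: closed_segment_subset)
    have "norm (c' x - c' t) \<le> \<theta>" if "x \<in> closed_segment t s" for x
    proof -
      have "dist x t < \<delta>"
        using that st by (auto simp: closed_segment_eq_real_ivl dist_real_def split: if_splits)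
      then show ?thesis
        using \<delta>(2)[of x t] seg that t by (auto simp: dist_norm)
    qed
    then have "norm (c s - c t - (s - t) *\<^sub>R c' t) \<le> norm (s - t) * \<theta>"
      using seg c(1)
      by (intro vector_differentiable_bound_linearization[where S = "closed_segment t s"])
        (auto intro: has_vector_derivative_at_within)
    then show ?thesis
      by (simp add: mult.commute)
  qed
  with \<delta>(1) show ?thesis ..
qed

lemma compact_pairs_separated:
  fixes c :: "'a::topological_space \<Rightarrow> 'b::metric_space"
  assumes P: "compact P" "P \<subseteq> S \<times> S" and c: "continuous_on S c"
    and apart: "\<And>s t. (s, t) \<in> P \<Longrightarrow> c s \<noteq> c t"
  obtains \<eta> where "\<eta> > 0" "\<And>s t. (s, t) \<in> P \<Longrightarrow> \<eta> \<le> dist (c s) (c t)"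
proof (cases "P = {}")
  case True
  then show ?thesis
    using that[of 1] by auto
next
  case False
  have "continuous_on P (\<lambda>p. dist (c (fst p)) (c (snd p)))"
    using P(2)
    by (intro continuous_intros continuous_on_compose2[OF c]) auto
  then obtain p0 where p0: "p0 \<in> P" "\<And>p. p \<in> P \<Longrightarrow> dist (c (fst p0)) (c (snd p0)) \<le> dist (c (fst p)) (c (snd p))"
    using continuous_attains_inf[OF P(1) False] by blast
  show ?thesis
  proof
    show "dist (c (fst p0)) (c (snd p0)) > 0"
      using apart[of "fst p0" "snd p0"] p0(1) by simp
    show "dist (c (fst p0)) (c (snd p0)) \<le> dist (c s) (c t)" if "(s, t) \<in> P" for s t
      using p0(2)[OF that] by simp
  qed
qed

lemma transversal_lower_bound:
  fixes e \<xi>1 \<xi>2 u :: "real \<Rightarrow> 'a::real_inner"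
  assumes S: "compact S" and cont: "continuous_on S e" "continuous_on S u"
    and u: "\<And>t. t \<in> S \<Longrightarrow> e t \<bullet> u t \<noteq> 0" "\<And>t. t \<in> S \<Longrightarrow> \<xi>1 t \<bullet> u t = 0"
      "\<And>t. t \<in> S \<Longrightarrow> \<xi>2 t \<bullet> u t = 0"
  obtains m where "m > 0"
    "\<And>t a v w. t \<in> S \<Longrightarrow> m * \<bar>a\<bar> \<le> norm (a *\<^sub>R e t + v *\<^sub>R \<xi>1 t - w *\<^sub>R \<xi>2 t)"
proof -
  define f where "f t = \<bar>e t \<bullet> u t\<bar> / norm (u t)" for t
  have unz: "u t \<noteq> 0" if "t \<in> S" for t
    using u(1)[OF that] by auto
  obtain m where m: "m > 0" "\<And>t. t \<in> S \<Longrightarrow> m \<le> f t"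
  proof (cases "S = {}")
    case True
    then show ?thesis
      using that[of 1] by auto
  next
    case False
    have "continuous_on S f"
      unfolding f_def using cont unz by (intro continuous_intros) auto
    then obtain t0 where "t0 \<in> S" "\<And>t. t \<in> S \<Longrightarrow> f t0 \<le> f t"
      using continuous_attains_inf[OF S False] by blast
    moreover have "f t0 > 0"
      using u(1) unz \<open>t0 \<in> S\<close> by (simp add: f_def)
    ultimately show ?thesis
      using that by blast
  qed
  have "m * \<bar>a\<bar> \<le> norm (a *\<^sub>R e t + v *\<^sub>R \<xi>1 t - w *\<^sub>R \<xi>2 t)" if t: "t \<in> S" for t a v w
  proof -
    let ?x = "a *\<^sub>R e t + v *\<^sub>R \<xi>1 t - w *\<^sub>R \<xi>2 t"
    have "\<bar>a\<bar> * \<bar>e t \<bullet> u t\<bar> = \<bar>?x \<bullet> u t\<bar>"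
      using u(2,3)[OF t] by (simp add: inner_diff_left inner_add_left abs_mult)
    also have "\<dots> \<le> norm ?x * norm (u t)"
      by (rule Cauchy_Schwarz_ineq2)
    finally have "\<bar>a\<bar> * f t \<le> norm ?x"
      using unz[OF t] by (simp add: f_def divide_simps mult.commute)
    moreover have "m * \<bar>a\<bar> \<le> \<bar>a\<bar> * f t"
      using m(2)[OF t] by (metis abs_ge_zero mult.commute mult_left_mono)
    ultimately show ?thesis
      by linarith
  qed
  with m(1) show ?thesis
    using that by blast
qed

lemma collision_near_diagonal:
  fixes c c' \<xi>1 \<xi>2 :: "real \<Rightarrow> 'a::real_normed_vector"
  assumes m: "m > 0" "m * \<bar>s - t\<bar> \<le> norm ((s - t) *\<^sub>R c' t + v *\<^sub>R \<xi>1 t - w *\<^sub>R \<xi>2 t)"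
    and c: "norm (c s - c t - (s - t) *\<^sub>R c' t) \<le> m / 2 * \<bar>s - t\<bar>"
    and \<xi>1: "norm (\<xi>1 s - \<xi>1 t) \<le> L * \<bar>s - t\<bar>" and v: "\<bar>v\<bar> * L \<le> m / 4"
    and eq: "c s + v *\<^sub>R \<xi>1 s = c t + w *\<^sub>R \<xi>2 t"
  shows "s = t"
proof -
  have split: "(s - t) *\<^sub>R c' t + v *\<^sub>R \<xi>1 t - w *\<^sub>R \<xi>2 t
      = - ((c s - c t - (s - t) *\<^sub>R c' t) + v *\<^sub>R (\<xi>1 s - \<xi>1 t))"
    using eq by (simp add: algebra_simps)
  have "m * \<bar>s - t\<bar> \<le> norm ((c s - c t - (s - t) *\<^sub>R c' t) + v *\<^sub>R (\<xi>1 s - \<xi>1 t))"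
    using m(2) unfolding split norm_minus_cancel .
  also have "\<dots> \<le> m / 2 * \<bar>s - t\<bar> + \<bar>v\<bar> * (L * \<bar>s - t\<bar>)"
  proof -
    have "norm (v *\<^sub>R (\<xi>1 s - \<xi>1 t)) \<le> \<bar>v\<bar> * (L * \<bar>s - t\<bar>)"
      using \<xi>1 by (simp add: mult_left_mono)
    then show ?thesis
      using norm_triangle_ineq[of "c s - c t - (s - t) *\<^sub>R c' t" "v *\<^sub>R (\<xi>1 s - \<xi>1 t)"] c
      by linarith
  qed
  also have "\<dots> \<le> m / 2 * \<bar>s - t\<bar> + m / 4 * \<bar>s - t\<bar>"
    using v by (metis abs_ge_zero add_left_mono mult.assoc mult_right_mono)
  finally show ?thesis
    using m(1) by (simp add: mult_le_cancel_right)
qed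

lemma collision_far_from_diagonal:
  fixes c \<xi>1 \<xi>2 :: "real \<Rightarrow> 'a::real_normed_vector"
  assumes far: "\<eta> \<le> dist (c s) (c t)"
    and bounded: "norm (\<xi>1 s) \<le> 1" "norm (\<xi>2 t) \<le> 1" and small: "\<bar>v\<bar> < \<eta> / 2" "\<bar>w\<bar> < \<eta> / 2"
    and eq: "c s + v *\<^sub>R \<xi>1 s = c t + w *\<^sub>R \<xi>2 t"
  shows False
proof -
  have "c s = c t + w *\<^sub>R \<xi>2 t - v *\<^sub>R \<xi>1 s"
    using eq by (metis add_diff_cancel_right')
  then have "dist (c s) (c t) = norm (w *\<^sub>R \<xi>2 t - v *\<^sub>R \<xi>1 s)"
    by (simp add: dist_norm)
  also have "\<dots> \<le> \<bar>w\<bar> + \<bar>v\<bar>"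
  proof -
    have "norm (w *\<^sub>R \<xi>2 t) \<le> \<bar>w\<bar>" "norm (v *\<^sub>R \<xi>1 s) \<le> \<bar>v\<bar>"
      using bounded by (simp_all add: mult_left_le)
    then show ?thesis
      using norm_triangle_ineq4[of "w *\<^sub>R \<xi>2 t" "v *\<^sub>R \<xi>1 s"] by linarith
  qed
  finally show False
    using far small by linarith
qed

lemma ruled_sheets_meet_on_diagonal:
  fixes c c' \<xi>1 \<xi>2 u :: "real \<Rightarrow> 'a::real_inner"
  assumes S: "compact S" "convex S"
    and c: "\<And>x. x \<in> S \<Longrightarrow> (c has_vector_derivative c' x) (at x)" "continuous_on S c'"
    and \<xi>1: "L-lipschitz_on S \<xi>1"
    and bounded: "\<And>x. x \<in> S \<Longrightarrow> norm (\<xi>1 x) \<le> 1" "\<And>x. x \<in> S \<Longrightarrow> norm (\<xi>2 x) \<le> 1"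
    and u: "continuous_on S u" "\<And>x. x \<in> S \<Longrightarrow> c' x \<bullet> u x \<noteq> 0"
      "\<And>x. x \<in> S \<Longrightarrow> \<xi>1 x \<bullet> u x = 0" "\<And>x. x \<in> S \<Longrightarrow> \<xi>2 x \<bullet> u x = 0"
    and Q: "compact Q" "Q \<subseteq> S \<times> S" "\<And>s t. (s, t) \<in> Q \<Longrightarrow> c s = c t \<Longrightarrow> s = t"
  obtains \<epsilon> where "\<epsilon> > 0"
    "\<And>s t v w. (s, t) \<in> Q \<Longrightarrow> \<bar>v\<bar> < \<epsilon> \<Longrightarrow> \<bar>w\<bar> < \<epsilon> \<Longrightarrow>
       c s + v *\<^sub>R \<xi>1 s = c t + w *\<^sub>R \<xi>2 t \<Longrightarrow> s = t"
proof -
  obtain m where m: "m > 0"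
    "\<And>t a v w. t \<in> S \<Longrightarrow> m * \<bar>a\<bar> \<le> norm (a *\<^sub>R c' t + v *\<^sub>R \<xi>1 t - w *\<^sub>R \<xi>2 t)"
    using transversal_lower_bound[OF S(1) c(2) u] by blast
  obtain \<delta> where \<delta>: "\<delta> > 0" "\<And>s t. s \<in> S \<Longrightarrow> t \<in> S \<Longrightarrow> \<bar>s - t\<bar> < \<delta> \<Longrightarrow>
      norm (c s - c t - (s - t) *\<^sub>R c' t) \<le> m / 2 * \<bar>s - t\<bar>"
    using uniform_linearization[OF c S, of "m / 2"] m(1) by auto
  define P where "P = Q \<inter> {p. \<delta> \<le> \<bar>fst p - snd p\<bar>}"
  have "compact P"
    unfolding P_def by (intro compact_Int_closed Q(1) closed_Collect_le continuous_intros)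
  moreover have "P \<subseteq> S \<times> S"
    using Q(2) by (auto simp: P_def)
  moreover have "continuous_on S c"
    using c(1) by (meson continuous_at_imp_continuous_on has_vector_derivative_continuous)
  moreover have "c s \<noteq> c t" if "(s, t) \<in> P" for s t
    using that Q(3) \<delta>(1) by (force simp: P_def)
  ultimately obtain \<eta> where \<eta>: "\<eta> > 0" "\<And>s t. (s, t) \<in> P \<Longrightarrow> \<eta> \<le> dist (c s) (c t)"
    using compact_pairs_separated by metis
  have L: "L \<ge> 0"
    using lipschitz_on_nonneg[OF \<xi>1] .
  \<comment> \<open>The first bound makes the variation of \<open>\<xi>1\<close> negligible near the diagonal, the second
    keeps the rulings too short to bridge the gap \<open>\<eta>\<close> away from it.\<close>
  define \<epsilon> where "\<epsilon> = min (m / (4 * (L + 1))) (\<eta> / 2)"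
  have "s = t" if st: "(s, t) \<in> Q" and v: "\<bar>v\<bar> < \<epsilon>" and w: "\<bar>w\<bar> < \<epsilon>"
    and eq: "c s + v *\<^sub>R \<xi>1 s = c t + w *\<^sub>R \<xi>2 t" for s t v w
  proof (cases "\<bar>s - t\<bar> < \<delta>")
    case True
    have s: "s \<in> S" and t: "t \<in> S"
      using st Q(2) by auto
    have "\<bar>v\<bar> * L \<le> \<epsilon> * (L + 1)"
      using v L by (intro mult_mono) auto
    also have "\<dots> \<le> m / (4 * (L + 1)) * (L + 1)"
      using L by (intro mult_right_mono) (auto simp: \<epsilon>_def)
    also have "\<dots> = m / 4"
      using L by (simp add: field_simps)
    finally show ?thesis
      using collision_near_diagonal[of m s t c' v \<xi>1 w \<xi>2 c L,
          OF m(1) m(2)[OF t] \<delta>(2)[OF s t True] lipschitz_on_normD[OF \<xi>1 s t, unfolded real_norm_def]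
          _ eq] by blast
  next
    case False
    then have "\<eta> \<le> dist (c s) (c t)"
      using st by (intro \<eta>(2)) (simp add: P_def)
    moreover have "norm (\<xi>1 s) \<le> 1" "norm (\<xi>2 t) \<le> 1"
      using st Q(2) bounded by auto
    moreover have "\<bar>v\<bar> < \<eta> / 2" "\<bar>w\<bar> < \<eta> / 2"
      using v w by (simp_all add: \<epsilon>_def)
    ultimately show ?thesis
      using collision_far_from_diagonal[of \<eta> c s t \<xi>1 \<xi>2 v w] eq by blast
  qed
  moreover have "\<epsilon> > 0"
    using m(1) L \<eta>(1) by (simp add: \<epsilon>_def)
  ultimately show ?thesis
    using that by blast
qed

lemma periodic_shift_int:
  assumes "periodic l f"
  shows "f (x + of_int k * l) = f x"
proof (induction k arbitrary: x rule: int_induct[where k = 0])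
  case base
  show ?case by simp
next
  case (step1 i)
  have "f (x + of_int (i + 1) * l) = f ((x + l) + of_int i * l)"
    by (simp add: algebra_simps)
  also have "\<dots> = f x"
    using step1.IH assms by (simp add: periodic_def)
  finally show ?case .
next
  case (step2 i)
  have "f (x + of_int (i - 1) * l) = f ((x - l) + of_int i * l)"
    by (simp add: algebra_simps)
  also have "\<dots> = f (x - l)"
    by (rule step2.IH)
  also have "\<dots> = f x"
    using assms unfolding periodic_def by (metis diff_add_cancel)
  finally show ?case .
qed

lemma periodic_vderiv:
  assumes f: "smooth_fn f" and p: "periodic l f"
  shows "periodic l (vderiv f)"
  unfolding periodic_def
proof
  fix s
  have "(f \<circ> (\<lambda>x. x + l) has_vector_derivative 1 *\<^sub>R vderiv f (s + l)) (at s)"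
    by (intro vector_diff_chain_at smooth_fn_has_vector_derivative[OF f] derivative_eq_intros) auto
  moreover have "f \<circ> (\<lambda>x. x + l) = f"
    using p by (auto simp: periodic_def)
  ultimately have "(f has_vector_derivative vderiv f (s + l)) (at s)"
    by simp
  then show "vderiv f (s + l) = vderiv f s"
    using smooth_fn_has_vector_derivative[OF f] by (rule vector_derivative_unique_at)
qed

lemma periodic_representative:
  assumes "l > (0::real)"
  obtains k :: int where "x + of_int k * l \<in> {0..<l}"
proof
  have "of_int \<lfloor>x / l\<rfloor> * l \<le> x" "x < (of_int \<lfloor>x / l\<rfloor> + 1) * l"
    using of_int_floor_le[of "x / l"] real_of_int_floor_add_one_gt[of "x / l"]
    by (simp_all only: pos_le_divide_eq[OF assms] pos_divide_less_eq[OF assms])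
  then show "x + of_int (- \<lfloor>x / l\<rfloor>) * l \<in> {0..<l}"
    by (simp add: algebra_simps)
qed

lemma Jeq_periodic:
  assumes "Jeq cl l s t" "cl \<Longrightarrow> periodic l f"
  shows "f s = f t"
proof (cases cl)
  case True
  then obtain k :: int where "s = t + of_int k * l"
    using assms(1) by (auto simp: Jeq_def algebra_simps)
  then show ?thesis
    using periodic_shift_int[OF assms(2)[OF True]] by simp
next
  case False
  then show ?thesis
    using assms(1) by (simp add: Jeq_def)
qed

lemma Jeq_trans:
  assumes "Jeq cl l s t" "Jeq cl l t u"
  shows "Jeq cl l s u"
proof (cases cl)
  case True
  then obtain i j :: int where "s - t = of_int i * l" "t - u = of_int j * l"
    using assms by (auto simp: Jeq_def)
  then have "s - u = of_int (i + j) * l"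
    by (simp add: algebra_simps)
  then show ?thesis
    using True unfolding Jeq_def by (simp only: if_True) blast
next
  case False
  then show ?thesis
    using assms by (simp add: Jeq_def)
qed

section \<open>The Frenet frame of a curve with positive curvature\<close>

lemma unit_vector_derivative_orthogonal:
  fixes f :: "real \<Rightarrow> 'a::real_inner"
  assumes f: "(f has_vector_derivative f') (at x)"
    and x: "x \<in> S" "x islimpt S" and unit: "\<And>y. y \<in> S \<Longrightarrow> norm (f y) = 1"
  shows "f x \<bullet> f' = 0"
proof -
  have "((\<lambda>y. f y \<bullet> f y) has_vector_derivative f x \<bullet> f' + f' \<bullet> f x) (at x within S)"
    using bounded_bilinear.has_vector_derivative[OF bounded_bilinear_inner
        has_vector_derivative_at_within[OF f] has_vector_derivative_at_within[OF f]] .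
  moreover have "((\<lambda>y. f y \<bullet> f y) has_vector_derivative 0) (at x within S)"
    by (rule has_vector_derivative_transform[OF x(1), where f = "\<lambda>_. 1"])
      (auto simp: unit power2_norm_eq_inner[symmetric])
  ultimately have "f x \<bullet> f' + f' \<bullet> f x = 0"
    using vector_derivative_unique_within x(2) trivial_limit_within by blast
  then show ?thesis
    by (simp add: inner_commute)
qed

definition orthonormal3 :: "'a::real_inner \<Rightarrow> 'a \<Rightarrow> 'a \<Rightarrow> bool" where
  "orthonormal3 e n b \<longleftrightarrow>
     e \<bullet> e = 1 \<and> n \<bullet> n = 1 \<and> b \<bullet> b = 1 \<and> e \<bullet> n = 0 \<and> e \<bullet> b = 0 \<and> n \<bullet> b = 0"

lemma orthonormal3_inner:
  assumes "orthonormal3 e n b"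
  shows "(x1 *\<^sub>R e + x2 *\<^sub>R n + x3 *\<^sub>R b) \<bullet> (y1 *\<^sub>R e + y2 *\<^sub>R n + y3 *\<^sub>R b)
      = x1 * y1 + x2 * y2 + x3 * y3"
  using assms
  by (simp add: orthonormal3_def inner_add_left inner_add_right inner_commute[of n e]
      inner_commute[of b e] inner_commute[of b n])

lemma orthonormal3_coordinates:
  assumes "orthonormal3 e n b"
  shows "e \<bullet> (y1 *\<^sub>R e + y2 *\<^sub>R n + y3 *\<^sub>R b) = y1"
    and "n \<bullet> (y1 *\<^sub>R e + y2 *\<^sub>R n + y3 *\<^sub>R b) = y2"
    and "b \<bullet> (y1 *\<^sub>R e + y2 *\<^sub>R n + y3 *\<^sub>R b) = y3"
  using orthonormal3_inner[OF assms, of 1 0 0] orthonormal3_inner[OF assms, of 0 1 0]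
    orthonormal3_inner[OF assms, of 0 0 1]
  by simp_all

lemma ruling_frame:
  "ruling c \<alpha> \<beta> s = cos (\<beta> s) *\<^sub>R tangent c s + (sin (\<beta> s) * cos (\<alpha> s)) *\<^sub>R principal_normal c s
     + (sin (\<beta> s) * sin (\<alpha> s)) *\<^sub>R binormal c s"
  by (simp add: ruling_def scaleR_add_right)

lemma normal_form_angles:
  assumes "normal_form cl l c \<alpha> \<beta>" "s \<in> Jdom cl l"
  shows "sin (\<beta> s) > 0" "cos (\<alpha> s) > 0" "sin (\<alpha> s) \<noteq> 0"
proof -
  have \<alpha>: "0 < \<bar>\<alpha> s\<bar>" "\<bar>\<alpha> s\<bar> < pi / 2" and \<beta>: "0 < \<beta> s" "\<beta> s < pi"
    using assms by (auto simp: normal_form_def)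
  show "sin (\<beta> s) > 0"
    using \<beta> by (rule sin_gt_zero)
  show "cos (\<alpha> s) > 0"
    using \<alpha> by (intro cos_gt_zero_pi) auto
  have "- pi < \<alpha> s" "\<alpha> s < pi"
    using \<alpha>(2) pi_gt_zero by linarith+
  then show "sin (\<alpha> s) \<noteq> 0"
    using sin_eq_0_pi[of "\<alpha> s"] \<alpha>(1) by auto
qed

locale frenet_curve =
  fixes cl :: bool and l :: real and c :: "real \<Rightarrow> real^3"
  assumes curve: "arclength_embedded_curve cl l c"
    and curvature_pos: "\<forall>s\<in>Jdom cl l. curvature c s > 0"
begin

abbreviation J :: "real set" where
  "J \<equiv> Jdom cl l"

lemma length_pos: "l > 0"
  using curve by (simp add: arclength_embedded_curve_def)

lemma smooth: "smooth_fn c"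
  using curve by (simp add: arclength_embedded_curve_def)

lemma closed_periodic: "cl \<Longrightarrow> periodic l c"
  using curve by (simp add: arclength_embedded_curve_def)

lemma tangent_norm: "s \<in> J \<Longrightarrow> norm (tangent c s) = 1"
  using curve by (simp add: arclength_embedded_curve_def tangent_def)

lemma islimpt_J: "s \<in> J \<Longrightarrow> s islimpt J"
  using length_pos by (auto simp: Jdom_def)

lemma frenet_orthonormal:
  assumes s: "s \<in> J"
  shows "orthonormal3 (tangent c s) (principal_normal c s) (binormal c s)"
proof -
  let ?e = "tangent c s" and ?n = "principal_normal c s" and ?c2 = "vderiv (vderiv c) s"
  have \<kappa>: "norm ?c2 > 0"
    using curvature_pos s by (auto simp: curvature_def)
  have ee: "?e \<bullet> ?e = 1"
    using tangent_norm[OF s] by (simp add: power2_norm_eq_inner[symmetric])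
  have nn: "?n \<bullet> ?n = 1"
    using \<kappa> by (simp add: principal_normal_def curvature_def power2_norm_eq_inner[symmetric]
        power2_eq_square)
  have "?e \<bullet> ?c2 = 0"
    unfolding tangent_def
    by (rule unit_vector_derivative_orthogonal[OF smooth_fn_has_vector_derivative[OF smooth_fn_vderiv[OF smooth]]
          s islimpt_J[OF s]]) (use tangent_norm in \<open>simp add: tangent_def\<close>)
  then have en: "?e \<bullet> ?n = 0"
    by (simp add: principal_normal_def)
  have "norm (binormal c s) = 1"
    using norm_cross_dot[of ?e ?n] tangent_norm[OF s] nn en
    by (simp add: binormal_def norm_eq_sqrt_inner)
  then have bb: "binormal c s \<bullet> binormal c s = 1"
    by (simp add: power2_norm_eq_inner[symmetric])
  show ?thesis
    unfolding orthonormal3_def using ee nn en bb by (simp add: binormal_def dot_cross_self)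
qed

lemma tangent_C1: "tangent c C1_differentiable_on S"
  unfolding tangent_def[abs_def] using smooth_fn_C1_differentiable_on[OF smooth_fn_vderiv[OF smooth]]
  by simp

lemma principal_normal_C1: "principal_normal c C1_differentiable_on J"
proof -
  have c2: "vderiv (vderiv c) C1_differentiable_on J"
    by (intro smooth_fn_C1_differentiable_on smooth_fn_vderiv smooth)
  have "vderiv (vderiv c) s \<noteq> 0" if "s \<in> J" for s
    using curvature_pos that by (auto simp: curvature_def)
  then have "(\<lambda>s. inverse (curvature c s)) C1_differentiable_on J"
    unfolding curvature_def by (intro C1_differentiable_on_inverse C1_differentiable_on_norm c2) auto
  then show ?thesis
    unfolding principal_normal_def[abs_def] divide_inverse mult_1
    using c2 by (rule C1_differentiable_on_scaleR)
qed

lemma binormal_C1: "binormal c C1_differentiable_on J"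
  unfolding binormal_def[abs_def]
  using bilinear_cross[unfolded bilinear_conv_bounded_bilinear] tangent_C1 principal_normal_C1
  by (rule C1_differentiable_on_bounded_bilinear)

lemma ruling_C1:
  assumes "normal_form cl l c \<alpha> \<beta>"
  shows "ruling c \<alpha> \<beta> C1_differentiable_on J"
proof -
  have "\<alpha> C1_differentiable_on J" "\<beta> C1_differentiable_on J"
    using assms by (auto simp: normal_form_def intro: smooth_fn_C1_differentiable_on)
  then show ?thesis
    unfolding ruling_def[abs_def]
    by (intro C1_differentiable_on_add C1_differentiable_on_scaleR C1_differentiable_on_cos
        C1_differentiable_on_sin tangent_C1 principal_normal_C1 binormal_C1)
qed

lemma ruling_norm:
  assumes s: "s \<in> J"
  shows "norm (ruling c \<alpha> \<beta> s) = 1"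
proof -
  let ?ca = "cos (\<alpha> s)" and ?sa = "sin (\<alpha> s)" and ?cb = "cos (\<beta> s)" and ?sb = "sin (\<beta> s)"
  have "ruling c \<alpha> \<beta> s \<bullet> ruling c \<alpha> \<beta> s = ?cb * ?cb + (?sb * ?ca) * (?sb * ?ca) + (?sb * ?sa) * (?sb * ?sa)"
    unfolding ruling_frame by (rule orthonormal3_inner[OF frenet_orthonormal[OF s]])
  also have "\<dots> = ?cb * ?cb + (?sb * ?sb) * (?ca * ?ca + ?sa * ?sa)"
    by algebra
  also have "\<dots> = 1"
    by simp
  finally show ?thesis
    by (simp add: norm_eq_sqrt_inner)
qed

lemma ruling_periodic:
  assumes "cl" "periodic l \<alpha>" "periodic l \<beta>"
  shows "periodic l (ruling c \<alpha> \<beta>)"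
proof -
  have "periodic l (vderiv c)" "periodic l (vderiv (vderiv c))"
    using assms(1) closed_periodic smooth
    by (auto intro!: periodic_vderiv smooth_fn_vderiv)
  then show ?thesis
    using assms(2,3)
    by (simp add: periodic_def ruling_def tangent_def principal_normal_def binormal_def curvature_def)
qed

(* For a closed curve every pair of parameters has representatives s in [0, l] and t within l/2
   of s; c is injective on such pairs, and [-l, 2l] contains all of them. *)
definition window :: "real set" where
  "window = (if cl then {-l..2 * l} else {-l/2..l/2})"

definition pair_window :: "(real \<times> real) set" where
  "pair_window = (if cl then ({0..l} \<times> window) \<inter> {p. \<bar>fst p - snd p\<bar> \<le> l/2} else J \<times> J)"

lemma window_compact: "compact window"
  by (simp add: window_def)

lemma window_convex: "convex window"
  by (simp add: window_def)

lemma window_subset: "window \<subseteq> J"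
  by (simp add: window_def Jdom_def)

lemma pair_window_compact: "compact pair_window"
  unfolding pair_window_def window_def Jdom_def
  by (auto intro!: compact_Int_closed compact_Times closed_Collect_le continuous_intros)

lemma pair_window_subset: "pair_window \<subseteq> window \<times> window"
  using length_pos unfolding pair_window_def window_def Jdom_def by auto

lemma pair_window_injective:
  assumes st: "(s, t) \<in> pair_window" and eq: "c s = c t"
  shows "s = t"
proof (cases cl)
  case True
  have inj: "inj_on c {0..<l}" and p: "periodic l c"
    using curve True by (simp_all add: arclength_embedded_curve_def)
  obtain i j :: int where i: "s + of_int i * l \<in> {0..<l}" and j: "t + of_int j * l \<in> {0..<l}"
    using periodic_representative[OF length_pos] by metis
  have "c (s + of_int i * l) = c (t + of_int j * l)"
    using eq periodic_shift_int[OF p] by simp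
  then have "s - t = of_int (j - i) * l"
    using inj_onD[OF inj _ i j] by (simp add: algebra_simps)
  moreover have "\<bar>s - t\<bar> \<le> l / 2"
    using st True unfolding pair_window_def by simp
  ultimately have "of_int \<bar>j - i\<bar> * l < 1 * l"
    using length_pos by (simp add: abs_mult)
  then have "\<bar>j - i\<bar> < 1"
    using length_pos mult_less_cancel_right[of _ l 1] by fastforce
  then have "j - i = 0"
    by simp
  then show ?thesis
    using \<open>s - t = of_int (j - i) * l\<close> by simp
next
  case False
  then have "inj_on c J"
    using curve by (simp add: arclength_embedded_curve_def Jdom_def)
  then show ?thesis
    using st eq False unfolding pair_window_def by (auto dest: inj_onD)
qed

lemma pair_window_representatives:
  assumes "s \<in> J" "t \<in> J"
  obtains s' t' where "(s', t') \<in> pair_window" "Jeq cl l s s'" "Jeq cl l t' t"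
proof (cases cl)
  case True
  obtain i :: int where i: "s + of_int i * l \<in> {0..<l}"
    using periodic_representative[OF length_pos] .
  define s' where "s' = s + of_int i * l"
  obtain j :: int where j: "(t - s' + l / 2) + of_int j * l \<in> {0..<l}"
    using periodic_representative[OF length_pos] .
  define t' where "t' = t + of_int j * l"
  have "0 \<le> s'" "s' < l" "s' - l / 2 \<le> t'" "t' < s' + l / 2"
    using i j by (simp_all add: s'_def t'_def algebra_simps)
  moreover have "\<bar>s' - t'\<bar> \<le> l / 2"
    using calculation by linarith
  ultimately have "(s', t') \<in> pair_window"
    using True length_pos unfolding pair_window_def window_def by auto
  moreover have "Jeq cl l s s'"
    using True unfolding Jeq_def s'_def by (auto intro!: exI[where x = "- i"])
  moreover have "Jeq cl l t' t"
    using True unfolding Jeq_def t'_def by (auto intro!: exI[where x = j])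
  ultimately show ?thesis
    using that by blast
next
  case False
  then show ?thesis
    using that assms unfolding pair_window_def Jeq_def by auto
qed

lemma curve_has_tangent: "(c has_vector_derivative tangent c x) (at x)"
  unfolding tangent_def by (rule smooth_fn_has_vector_derivative[OF smooth])

lemma ruled_sheets_meet_on_pair_window:
  fixes \<xi>1 \<xi>2 u :: "real \<Rightarrow> real^3"
  assumes \<xi>1: "\<xi>1 C1_differentiable_on J"
    and unit: "\<And>s. s \<in> J \<Longrightarrow> norm (\<xi>1 s) = 1" "\<And>s. s \<in> J \<Longrightarrow> norm (\<xi>2 s) = 1"
    and u: "continuous_on J u" "\<And>s. s \<in> J \<Longrightarrow> tangent c s \<bullet> u s \<noteq> 0"
      "\<And>s. s \<in> J \<Longrightarrow> \<xi>1 s \<bullet> u s = 0" "\<And>s. s \<in> J \<Longrightarrow> \<xi>2 s \<bullet> u s = 0"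
  obtains \<epsilon> where "\<epsilon> > 0"
    "\<And>s t v w. (s, t) \<in> pair_window \<Longrightarrow> \<bar>v\<bar> < \<epsilon> \<Longrightarrow> \<bar>w\<bar> < \<epsilon> \<Longrightarrow>
       c s + v *\<^sub>R \<xi>1 s = c t + w *\<^sub>R \<xi>2 t \<Longrightarrow> s = t"
proof -
  have in_J: "x \<in> J" if "x \<in> window" for x
    using window_subset that by blast
  obtain L where L: "L-lipschitz_on window \<xi>1"
    using C1_differentiable_on_imp_lipschitz[OF C1_differentiable_on_subset[OF \<xi>1 window_subset]
        window_compact window_convex] .
  have bounded: "\<And>x. x \<in> window \<Longrightarrow> norm (\<xi>1 x) \<le> 1" "\<And>x. x \<in> window \<Longrightarrow> norm (\<xi>2 x) \<le> 1"
    using unit in_J by auto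
  show ?thesis
    using ruled_sheets_meet_on_diagonal[OF window_compact window_convex curve_has_tangent
        C1_differentiable_imp_continuous_on[OF tangent_C1] L bounded
        continuous_on_subset[OF u(1) window_subset] u(2-4)[OF in_J]
        pair_window_compact pair_window_subset pair_window_injective] that
    by blast
qed

lemma ruled_sheets_meet_on_Jeq:
  fixes \<xi>1 \<xi>2 u :: "real \<Rightarrow> real^3"
  assumes \<xi>1: "\<xi>1 C1_differentiable_on J"
    and unit: "\<And>s. s \<in> J \<Longrightarrow> norm (\<xi>1 s) = 1" "\<And>s. s \<in> J \<Longrightarrow> norm (\<xi>2 s) = 1"
    and periodic: "cl \<Longrightarrow> periodic l \<xi>1" "cl \<Longrightarrow> periodic l \<xi>2"
    and u: "continuous_on J u" "\<And>s. s \<in> J \<Longrightarrow> tangent c s \<bullet> u s \<noteq> 0"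
      "\<And>s. s \<in> J \<Longrightarrow> \<xi>1 s \<bullet> u s = 0" "\<And>s. s \<in> J \<Longrightarrow> \<xi>2 s \<bullet> u s = 0"
  obtains \<epsilon> where "\<epsilon> > 0"
    "\<And>s t v w. s \<in> J \<Longrightarrow> t \<in> J \<Longrightarrow> \<bar>v\<bar> < \<epsilon> \<Longrightarrow> \<bar>w\<bar> < \<epsilon> \<Longrightarrow>
       c s + v *\<^sub>R \<xi>1 s = c t + w *\<^sub>R \<xi>2 t \<Longrightarrow> Jeq cl l s t \<and> v *\<^sub>R \<xi>1 t = w *\<^sub>R \<xi>2 t"
proof -
  obtain \<epsilon> where \<epsilon>: "\<epsilon> > 0" and diagonal: "\<And>s t v w. (s, t) \<in> pair_window \<Longrightarrow> \<bar>v\<bar> < \<epsilon> \<Longrightarrow>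
      \<bar>w\<bar> < \<epsilon> \<Longrightarrow> c s + v *\<^sub>R \<xi>1 s = c t + w *\<^sub>R \<xi>2 t \<Longrightarrow> s = t"
    using ruled_sheets_meet_on_pair_window[OF \<xi>1 unit u] by blast
  show ?thesis
  proof (rule that[OF \<epsilon>])
    fix s t v w
    assume s: "s \<in> J" and t: "t \<in> J" and v: "\<bar>v\<bar> < \<epsilon>" and w: "\<bar>w\<bar> < \<epsilon>"
      and eq: "c s + v *\<^sub>R \<xi>1 s = c t + w *\<^sub>R \<xi>2 t"
    obtain s' t' where st': "(s', t') \<in> pair_window" "Jeq cl l s s'" "Jeq cl l t' t"
      using pair_window_representatives[OF s t] .
    have "c s + v *\<^sub>R \<xi>1 s = c s' + v *\<^sub>R \<xi>1 s'"
      using Jeq_periodic[OF st'(2), where f = "\<lambda>x. c x + v *\<^sub>R \<xi>1 x"] closed_periodic periodic(1)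
      by (simp add: periodic_def)
    moreover have "c t' + w *\<^sub>R \<xi>2 t' = c t + w *\<^sub>R \<xi>2 t"
      using Jeq_periodic[OF st'(3), where f = "\<lambda>x. c x + w *\<^sub>R \<xi>2 x"] closed_periodic periodic(2)
      by (simp add: periodic_def)
    ultimately have eq': "c s' + v *\<^sub>R \<xi>1 s' = c t' + w *\<^sub>R \<xi>2 t'"
      using eq by simp
    then have "s' = t'"
      using diagonal[OF st'(1) v w] by blast
    have "Jeq cl l s t"
      using Jeq_trans[OF st'(2)] st'(3) \<open>s' = t'\<close> by simp
    moreover have "v *\<^sub>R \<xi>1 t' = w *\<^sub>R \<xi>2 t'"
      using eq' \<open>s' = t'\<close> by simp
    then have "v *\<^sub>R \<xi>1 t = w *\<^sub>R \<xi>2 t"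
      using Jeq_periodic[OF st'(3), of \<xi>1] Jeq_periodic[OF st'(3), of \<xi>2] periodic by simp
    ultimately show "Jeq cl l s t \<and> v *\<^sub>R \<xi>1 t = w *\<^sub>R \<xi>2 t" ..
  qed
qed

lemma ruling_coordinates:
  assumes "s \<in> J"
  shows "tangent c s \<bullet> ruling c \<alpha> \<beta> s = cos (\<beta> s)"
    and "principal_normal c s \<bullet> ruling c \<alpha> \<beta> s = sin (\<beta> s) * cos (\<alpha> s)"
    and "binormal c s \<bullet> ruling c \<alpha> \<beta> s = sin (\<beta> s) * sin (\<alpha> s)"
  unfolding ruling_frame orthonormal3_coordinates[OF frenet_orthonormal[OF assms]] by (rule refl)+

lemma ruling_transversal:
  assumes nf: "normal_form cl l c \<alpha> \<beta>"
  obtains u where "continuous_on J u" "\<And>s. s \<in> J \<Longrightarrow> tangent c s \<bullet> u s \<noteq> 0"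
    "\<And>s. s \<in> J \<Longrightarrow> ruling c \<alpha> \<beta> s \<bullet> u s = 0"
proof -
  let ?\<xi> = "ruling c \<alpha> \<beta>"
  define u where "u s = tangent c s - (tangent c s \<bullet> ?\<xi> s) *\<^sub>R ?\<xi> s" for s
  have "u C1_differentiable_on J"
    unfolding u_def
    by (intro C1_differentiable_on_diff C1_differentiable_on_scaleR tangent_C1 ruling_C1[OF nf]
        C1_differentiable_on_bounded_bilinear[OF bounded_bilinear_inner])
  moreover have "tangent c s \<bullet> u s \<noteq> 0" if "s \<in> J" for s
  proof -
    have "tangent c s \<bullet> u s = 1 - (cos (\<beta> s))\<^sup>2"
      using tangent_norm[OF that] ruling_coordinates(1)[OF that]
      by (simp add: u_def inner_diff_right power2_norm_eq_inner[symmetric] power2_eq_square)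
    then show ?thesis
      using normal_form_angles(1)[OF nf that] by (simp add: sin_squared_eq[symmetric])
  qed
  moreover have "?\<xi> s \<bullet> u s = 0" if "s \<in> J" for s
    using ruling_norm[OF that]
    by (simp add: u_def inner_diff_right inner_commute power2_norm_eq_inner[symmetric])
  ultimately show ?thesis
    using that C1_differentiable_imp_continuous_on by blast
qed

lemma dual_rulings_transversal:
  assumes nf: "normal_form cl l c \<alpha> \<beta>" and nfd: "normal_form cl l c (\<lambda>s. - \<alpha> s) \<beta>d"
  obtains u where "continuous_on J u" "\<And>s. s \<in> J \<Longrightarrow> tangent c s \<bullet> u s \<noteq> 0"
    "\<And>s. s \<in> J \<Longrightarrow> ruling c \<alpha> \<beta> s \<bullet> u s = 0"
    "\<And>s. s \<in> J \<Longrightarrow> ruling c (\<lambda>s. - \<alpha> s) \<beta>d s \<bullet> u s = 0"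
proof -
  \<comment> \<open>\<open>u\<close> is the cross product of the two rulings, written in the Frenet frame.\<close>
  define u where "u s = (- 2 * sin (\<beta> s) * sin (\<beta>d s) * cos (\<alpha> s) * sin (\<alpha> s)) *\<^sub>R tangent c s
      + (sin (\<alpha> s) * (sin (\<beta> s) * cos (\<beta>d s) + cos (\<beta> s) * sin (\<beta>d s))) *\<^sub>R principal_normal c s
      + (cos (\<alpha> s) * (cos (\<beta> s) * sin (\<beta>d s) - sin (\<beta> s) * cos (\<beta>d s))) *\<^sub>R binormal c s" for s
  have "\<alpha> C1_differentiable_on J" "\<beta> C1_differentiable_on J" "\<beta>d C1_differentiable_on J"
    using nf nfd by (auto simp: normal_form_def intro: smooth_fn_C1_differentiable_on)
  then have "u C1_differentiable_on J"
    unfolding u_def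
    by (intro C1_differentiable_on_add C1_differentiable_on_diff C1_differentiable_on_scaleR
        C1_differentiable_on_mult C1_differentiable_on_const C1_differentiable_on_cos
        C1_differentiable_on_sin tangent_C1 principal_normal_C1 binormal_C1)
  moreover have "tangent c s \<bullet> u s \<noteq> 0" if "s \<in> J" for s
    unfolding u_def orthonormal3_coordinates(1)[OF frenet_orthonormal[OF that]]
    using normal_form_angles[OF nf that] normal_form_angles(1)[OF nfd that] by simp
  moreover have "ruling c \<alpha> \<beta> s \<bullet> u s = 0" "ruling c (\<lambda>s. - \<alpha> s) \<beta>d s \<bullet> u s = 0"
    if "s \<in> J" for s
    unfolding ruling_frame u_def orthonormal3_inner[OF frenet_orthonormal[OF that]] cos_minus sin_minus
    by algebra+
  ultimately show ?thesis
    using that C1_differentiable_imp_continuous_on by blast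
qed

lemma dual_rulings_independent:
  assumes nf: "normal_form cl l c \<alpha> \<beta>" and nfd: "normal_form cl l c (\<lambda>s. - \<alpha> s) \<beta>d"
    and s: "s \<in> J" and vw: "v *\<^sub>R ruling c \<alpha> \<beta> s = w *\<^sub>R ruling c (\<lambda>s. - \<alpha> s) \<beta>d s"
  shows "v = 0" "w = 0"
proof -
  have "v * (sin (\<beta> s) * cos (\<alpha> s)) = w * (sin (\<beta>d s) * cos (\<alpha> s))"
    using arg_cong[OF vw, of "inner (principal_normal c s)"] ruling_coordinates(2)[OF s] by simp
  moreover have "v * (sin (\<beta> s) * sin (\<alpha> s)) = - w * (sin (\<beta>d s) * sin (\<alpha> s))"
    using arg_cong[OF vw, of "inner (binormal c s)"] ruling_coordinates(3)[OF s] by simp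
  ultimately have "v * sin (\<beta> s) = w * sin (\<beta>d s)" "v * sin (\<beta> s) = - w * sin (\<beta>d s)"
    using normal_form_angles[OF nf s] by (simp_all add: mult.assoc[symmetric])
  then show "v = 0" "w = 0"
    using normal_form_angles(1)[OF nf s] normal_form_angles(1)[OF nfd s] by auto
qed

end

definition inj_on_mod_period :: "bool \<Rightarrow> real \<Rightarrow> (real \<times> real \<Rightarrow> 'a) \<Rightarrow> (real \<times> real) set \<Rightarrow> bool" where
  "inj_on_mod_period cl l F \<Omega> \<longleftrightarrow>
     (\<forall>p\<in>\<Omega>. \<forall>q\<in>\<Omega>. F p = F q \<longrightarrow> Jeq cl l (fst p) (fst q) \<and> snd p = snd q)"

definition meet_only_on_curve :: "(real \<times> real \<Rightarrow> 'a) \<Rightarrow> (real \<times> real \<Rightarrow> 'a) \<Rightarrow> (real \<times> real) set \<Rightarrow> bool" where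
  "meet_only_on_curve F G \<Omega> \<longleftrightarrow> (\<forall>p\<in>\<Omega>. \<forall>q\<in>\<Omega>. F p = G q \<longrightarrow> snd p = 0 \<and> snd q = 0)"

lemma inj_on_mod_period_subset:
  "inj_on_mod_period cl l F \<Omega> \<Longrightarrow> \<Omega>' \<subseteq> \<Omega> \<Longrightarrow> inj_on_mod_period cl l F \<Omega>'"
  unfolding inj_on_mod_period_def by blast

lemma meet_only_on_curve_subset:
  "meet_only_on_curve F G \<Omega> \<Longrightarrow> \<Omega>' \<subseteq> \<Omega> \<Longrightarrow> meet_only_on_curve F G \<Omega>'"
  unfolding meet_only_on_curve_def by blast

lemma mem_Omega: "(s, v) \<in> Omega cl l \<epsilon> \<longleftrightarrow> s \<in> Jdom cl l \<and> \<bar>v\<bar> < \<epsilon>"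
  by (auto simp: Omega_def abs_less_iff)

lemma Omega_mono: "\<epsilon> \<le> \<epsilon>' \<Longrightarrow> Omega cl l \<epsilon> \<subseteq> Omega cl l \<epsilon>'"
  by (auto simp: Omega_def)

lemma image_Omega_Int:
  assumes "\<epsilon> > 0" "meet_only_on_curve F G (Omega cl l \<epsilon>)"
    and "\<And>s. F (s, 0) = c s" "\<And>s. G (s, 0) = c s"
  shows "F ` Omega cl l \<epsilon> \<inter> G ` Omega cl l \<epsilon> = c ` Jdom cl l"
proof
  show "F ` Omega cl l \<epsilon> \<inter> G ` Omega cl l \<epsilon> \<subseteq> c ` Jdom cl l"
  proof
    fix x
    assume "x \<in> F ` Omega cl l \<epsilon> \<inter> G ` Omega cl l \<epsilon>"
    then obtain s v q where p: "(s, v) \<in> Omega cl l \<epsilon>" "q \<in> Omega cl l \<epsilon>" "x = F (s, v)" "F (s, v) = G q"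
      by auto
    then have "v = 0"
      using assms(2) unfolding meet_only_on_curve_def by fastforce
    then have "x = c s" "s \<in> Jdom cl l"
      using p assms(3) by (simp_all add: mem_Omega)
    then show "x \<in> c ` Jdom cl l"
      by blast
  qed
  show "c ` Jdom cl l \<subseteq> F ` Omega cl l \<epsilon> \<inter> G ` Omega cl l \<epsilon>"
  proof
    fix x
    assume "x \<in> c ` Jdom cl l"
    then obtain s where "s \<in> Jdom cl l" "x = F (s, 0)" "x = G (s, 0)"
      using assms(3,4) by auto
    moreover have "(s, 0) \<in> Omega cl l \<epsilon> \<longleftrightarrow> s \<in> Jdom cl l"
      using assms(1) by (simp add: mem_Omega)
    ultimately show "x \<in> F ` Omega cl l \<epsilon> \<inter> G ` Omega cl l \<epsilon>"
      by blast
  qed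
qed

lemma origami_inj_on_mod_period:
  assumes F: "inj_on_mod_period cl l F \<Omega>" and G: "inj_on_mod_period cl l G \<Omega>"
    and FG: "meet_only_on_curve F G \<Omega>"
  shows "inj_on_mod_period cl l (origami F G) \<Omega>"
  unfolding inj_on_mod_period_def
proof (intro ballI impI)
  fix p q
  assume pq: "p \<in> \<Omega>" "q \<in> \<Omega>" and eq: "origami F G p = origami F G q"
  have origami: "origami F G x = (if snd x \<ge> 0 then F x else G x)" for x
    by (cases x) (simp add: origami_def)
  consider "snd p \<ge> 0" "snd q \<ge> 0" | "snd p < 0" "snd q < 0"
    | "snd p \<ge> 0" "snd q < 0" | "snd p < 0" "snd q \<ge> 0"
    by linarith
  then show "Jeq cl l (fst p) (fst q) \<and> snd p = snd q"
  proof cases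
    case 1
    then have "F p = F q"
      using eq by (simp add: origami)
    then show ?thesis
      using F pq unfolding inj_on_mod_period_def by blast
  next
    case 2
    then have "G p = G q"
      using eq by (simp add: origami)
    then show ?thesis
      using G pq unfolding inj_on_mod_period_def by blast
  next
    case 3
    then have "F p = G q"
      using eq by (simp add: origami)
    then show ?thesis
      using FG pq 3 unfolding meet_only_on_curve_def by fastforce
  next
    case 4
    then have "F q = G p"
      using eq by (simp add: origami)
    then show ?thesis
      using FG pq 4 unfolding meet_only_on_curve_def by fastforce
  qed
qed

context frenet_curve
begin

lemma strip_self_intersection:
  assumes nf: "normal_form cl l c \<alpha> \<beta>"
  obtains \<epsilon> where "\<epsilon> > 0" "inj_on_mod_period cl l (strip c \<alpha> \<beta>) (Omega cl l \<epsilon>)"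
proof -
  let ?\<xi> = "ruling c \<alpha> \<beta>"
  obtain u where u: "continuous_on J u" "\<And>s. s \<in> J \<Longrightarrow> tangent c s \<bullet> u s \<noteq> 0"
    "\<And>s. s \<in> J \<Longrightarrow> ?\<xi> s \<bullet> u s = 0"
    using ruling_transversal[OF nf] by blast
  have periodic: "cl \<Longrightarrow> periodic l ?\<xi>"
    using nf by (intro ruling_periodic) (auto simp: normal_form_def)
  obtain \<epsilon> where \<epsilon>: "\<epsilon> > 0" and meet: "\<And>s t v w. s \<in> J \<Longrightarrow> t \<in> J \<Longrightarrow> \<bar>v\<bar> < \<epsilon> \<Longrightarrow>
      \<bar>w\<bar> < \<epsilon> \<Longrightarrow> c s + v *\<^sub>R ?\<xi> s = c t + w *\<^sub>R ?\<xi> t \<Longrightarrow> Jeq cl l s t \<and> v *\<^sub>R ?\<xi> t = w *\<^sub>R ?\<xi> t"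
    using ruled_sheets_meet_on_Jeq[OF ruling_C1[OF nf] ruling_norm ruling_norm periodic periodic
        u(1,2) u(3) u(3)] by blast
  have "inj_on_mod_period cl l (strip c \<alpha> \<beta>) (Omega cl l \<epsilon>)"
    unfolding inj_on_mod_period_def
  proof (intro ballI impI)
    fix p q
    assume "p \<in> Omega cl l \<epsilon>" "q \<in> Omega cl l \<epsilon>" "strip c \<alpha> \<beta> p = strip c \<alpha> \<beta> q"
    moreover obtain s v t w where pq: "p = (s, v)" "q = (t, w)"
      by force
    ultimately have st: "s \<in> J" "t \<in> J" "\<bar>v\<bar> < \<epsilon>" "\<bar>w\<bar> < \<epsilon>"
      and "c s + v *\<^sub>R ?\<xi> s = c t + w *\<^sub>R ?\<xi> t"
      by (simp_all add: mem_Omega strip_def)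
    then have "Jeq cl l s t" "v *\<^sub>R ?\<xi> t = w *\<^sub>R ?\<xi> t"
      using meet by blast+
    moreover have "norm (?\<xi> t) = 1"
      using ruling_norm[OF st(2)] .
    ultimately show "Jeq cl l (fst p) (fst q) \<and> snd p = snd q"
      using pq by (auto simp: scaleR_cancel_right)
  qed
  with \<epsilon> show ?thesis
    using that by blast
qed

lemma strip_dual_intersection:
  assumes nf: "normal_form cl l c \<alpha> \<beta>" and nfd: "normal_form cl l c (\<lambda>s. - \<alpha> s) \<beta>d"
  obtains \<epsilon> where "\<epsilon> > 0"
    "meet_only_on_curve (strip c \<alpha> \<beta>) (strip c (\<lambda>s. - \<alpha> s) \<beta>d) (Omega cl l \<epsilon>)"
proof -
  let ?\<xi> = "ruling c \<alpha> \<beta>" and ?\<xi>d = "ruling c (\<lambda>s. - \<alpha> s) \<beta>d"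
  obtain u where u: "continuous_on J u" "\<And>s. s \<in> J \<Longrightarrow> tangent c s \<bullet> u s \<noteq> 0"
    "\<And>s. s \<in> J \<Longrightarrow> ?\<xi> s \<bullet> u s = 0" "\<And>s. s \<in> J \<Longrightarrow> ?\<xi>d s \<bullet> u s = 0"
    using dual_rulings_transversal[OF nf nfd] by blast
  have periodic: "cl \<Longrightarrow> periodic l ?\<xi>" "cl \<Longrightarrow> periodic l ?\<xi>d"
    using nf nfd by (auto intro!: ruling_periodic simp: normal_form_def)
  obtain \<epsilon> where \<epsilon>: "\<epsilon> > 0" and meet: "\<And>s t v w. s \<in> J \<Longrightarrow> t \<in> J \<Longrightarrow> \<bar>v\<bar> < \<epsilon> \<Longrightarrow>
      \<bar>w\<bar> < \<epsilon> \<Longrightarrow> c s + v *\<^sub>R ?\<xi> s = c t + w *\<^sub>R ?\<xi>d t \<Longrightarrow> Jeq cl l s t \<and> v *\<^sub>R ?\<xi> t = w *\<^sub>R ?\<xi>d t"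
    using ruled_sheets_meet_on_Jeq[OF ruling_C1[OF nf] ruling_norm ruling_norm periodic u] by blast
  have "meet_only_on_curve (strip c \<alpha> \<beta>) (strip c (\<lambda>s. - \<alpha> s) \<beta>d) (Omega cl l \<epsilon>)"
    unfolding meet_only_on_curve_def
  proof (intro ballI impI)
    fix p q
    assume "p \<in> Omega cl l \<epsilon>" "q \<in> Omega cl l \<epsilon>" "strip c \<alpha> \<beta> p = strip c (\<lambda>s. - \<alpha> s) \<beta>d q"
    moreover obtain s v t w where pq: "p = (s, v)" "q = (t, w)"
      by force
    ultimately have st: "s \<in> J" "t \<in> J" "\<bar>v\<bar> < \<epsilon>" "\<bar>w\<bar> < \<epsilon>"
      and "c s + v *\<^sub>R ?\<xi> s = c t + w *\<^sub>R ?\<xi>d t"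
      by (simp_all add: mem_Omega strip_def)
    then have "v *\<^sub>R ?\<xi> t = w *\<^sub>R ?\<xi>d t"
      using meet by blast
    then show "snd p = 0 \<and> snd q = 0"
      using dual_rulings_independent[OF nf nfd st(2)] pq by simp
  qed
  with \<epsilon> show ?thesis
    using that by blast
qed

end

theorem proposition2p21:
  fixes cl :: bool  (* True: closed curve *) and l :: real and c :: "real \<Rightarrow> real^3"
    and \<alpha> \<beta> \<beta>d :: "real \<Rightarrow> real"
  assumes curve: "arclength_embedded_curve cl l c"
    and kappa_pos: "\<forall>s\<in>Jdom cl l. curvature c s > 0"
    and F: "normal_form cl l c \<alpha> \<beta>"
    and dual: "normal_form cl l c (\<lambda>s. - \<alpha> s) \<beta>d"
  shows "\<exists>\<epsilon>0>0. \<forall>\<epsilon>. 0 < \<epsilon> \<and> \<epsilon> < \<epsilon>0 \<longrightarrow>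
           strip c \<alpha> \<beta> ` Omega cl l \<epsilon> \<inter> strip c (\<lambda>s. - \<alpha> s) \<beta>d ` Omega cl l \<epsilon>
             = c ` Jdom cl l
         \<and> (\<forall>p\<in>Omega cl l \<epsilon>. \<forall>q\<in>Omega cl l \<epsilon>.
              origami (strip c \<alpha> \<beta>) (strip c (\<lambda>s. - \<alpha> s) \<beta>d) p
                = origami (strip c \<alpha> \<beta>) (strip c (\<lambda>s. - \<alpha> s) \<beta>d) q
              \<longrightarrow> Jeq cl l (fst p) (fst q) \<and> snd p = snd q)"
proof -
  interpret frenet_curve cl l c
    using curve kappa_pos by unfold_locales
  let ?F = "strip c \<alpha> \<beta>" and ?Fd = "strip c (\<lambda>s. - \<alpha> s) \<beta>d"
  obtain \<epsilon>1 where "\<epsilon>1 > 0" and F_inj: "inj_on_mod_period cl l ?F (Omega cl l \<epsilon>1)"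
    using strip_self_intersection[OF F] .
  obtain \<epsilon>2 where "\<epsilon>2 > 0" and Fd_inj: "inj_on_mod_period cl l ?Fd (Omega cl l \<epsilon>2)"
    using strip_self_intersection[OF dual] .
  obtain \<epsilon>3 where "\<epsilon>3 > 0" and meet: "meet_only_on_curve ?F ?Fd (Omega cl l \<epsilon>3)"
    using strip_dual_intersection[OF F dual] .
  have "?F ` Omega cl l \<epsilon> \<inter> ?Fd ` Omega cl l \<epsilon> = c ` J
      \<and> inj_on_mod_period cl l (origami ?F ?Fd) (Omega cl l \<epsilon>)"
    if "0 < \<epsilon>" "\<epsilon> < min \<epsilon>1 (min \<epsilon>2 \<epsilon>3)" for \<epsilon>
  proof -
    have "Omega cl l \<epsilon> \<subseteq> Omega cl l \<epsilon>1" "Omega cl l \<epsilon> \<subseteq> Omega cl l \<epsilon>2" "Omega cl l \<epsilon> \<subseteq> Omega cl l \<epsilon>3"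
      using that by (simp_all add: Omega_mono)
    then show ?thesis
      using that inj_on_mod_period_subset[OF F_inj] inj_on_mod_period_subset[OF Fd_inj]
        meet_only_on_curve_subset[OF meet]
      by (simp add: image_Omega_Int strip_def origami_inj_on_mod_period)
  qed
  moreover have "min \<epsilon>1 (min \<epsilon>2 \<epsilon>3) > 0"
    using \<open>\<epsilon>1 > 0\<close> \<open>\<epsilon>2 > 0\<close> \<open>\<epsilon>3 > 0\<close> by simp
  ultimately show ?thesis
    unfolding inj_on_mod_period_def by blast
qed

end
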